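(* Let $K\subset\mathbb{C}$ be a subfield. Let $\mathcal{A}=\{H_1,\dots,H_n\}$ be an arrangement of distinct lines in $\mathbb{P}^2_{\mathbb{C}}$ with $|H_n\cap\operatorname{mult}(\mathcal{A})|\le 2$, and let $\mathcal{A}'=\{H_1,\dots,H_{n-1}\}$, $I=I(\mathcal{A})$, $I'=I(\mathcal{A}')$. If the set $\mathcal{R}(I')(K)$ of $K$-valued points is Zariski dense in $\mathcal{R}(I')(\mathbb{C})$, then $\mathcal{R}(I)(K)$ is Zariski dense in $\mathcal{R}(I)(\mathbb{C})$; in particular $\mathcal{R}(I)(K)\ne\emptyset$, i.e. $I$ is realizable over $K$. Moreover, for every inductively connected arrangement $\mathcal{A}$, the incidence $I(\mathcal{A})$ is realizable over $\mathbb{Q}$.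
   Context: Lines $H_i=\{a_ix+b_iy+c_iz=0\}$ are identified with points $(a_i:b_i:c_i)\in(\mathbb{P}^2)^*$; $\det(H_i,H_j,H_k)$ is the determinant of their coefficient rows. $I(\mathcal{A})=\{\{i,j,k\}: H_i\cap H_j\cap H_k\ne\emptyset\}$. $\mathcal{R}(I)=\{(H_1,\dots,H_n)\in((\mathbb{P}^2)^* )^n: H_i\ne H_j\ (i\ne j),\ \det(H_i,H_j,H_k)=0 \text{ iff } \{i,j,k\}\in I\}$; $\mathcal{R}(I)(K)$ denotes its points all of whose lines have coordinates in $K$; $I$ is realizable over $K$ if $\mathcal{R}(I)(K)\neq\emptyset$ (equivalently, some arrangement with defining linear forms over $K$ has incidence $I$). $\operatorname{mult}(\mathcal{A})$ is the set of points on at least three lines of $\mathcal{A}$. $\mathcal{A}$ is inductively connected (i.c.) if its lines can be numbered $H_1,\dots,H_n$ so that $|H_t\cap\operatorname{mult}(\{H_1,\dots,H_t\})|\le 2$ for all $t$. *)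

theory Defs
  imports "HOL-Analysis.Analysis"
begin

text \<open>A line a x + b y + c z = 0 of the complex projective plane is represented by
  a nonzero coefficient vector (a,b,c) in complex^3 (a representative of the point
  (a:b:c) of the dual plane).  An arrangement of n lines is a map H :: nat => complex^3,
  of which only the values H 0, ..., H (n-1) matter.\<close>

type_synonym cvec = "complex ^ 3"

definition linform :: "cvec \<Rightarrow> cvec \<Rightarrow> complex" where
  "linform a p = (\<Sum>j\<in>UNIV. a $ j * p $ j)"

definition projpt :: "cvec \<Rightarrow> cvec set" where
  "projpt p = range (\<lambda>c::complex. c *s p)"

definition proj_eq :: "cvec \<Rightarrow> cvec \<Rightarrow> bool" where
  "proj_eq u v \<longleftrightarrow> (\<exists>c::complex. c \<noteq> 0 \<and> u = c *s v)"

definition det3 :: "cvec \<Rightarrow> cvec \<Rightarrow> cvec \<Rightarrow> complex" where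
  "det3 a b c = det (vector [a, b, c] :: complex ^ 3 ^ 3)"

definition arrangement :: "(nat \<Rightarrow> cvec) \<Rightarrow> nat \<Rightarrow> bool" where
  "arrangement H n \<longleftrightarrow> (\<forall>i<n. H i \<noteq> 0) \<and>
     (\<forall>i<n. \<forall>j<n. i \<noteq> j \<longrightarrow> \<not> proj_eq (H i) (H j))"

definition incidence :: "(nat \<Rightarrow> cvec) \<Rightarrow> nat \<Rightarrow> nat set set" where
  "incidence H n = {{i, j, k} | i j k. i < n \<and> j < n \<and> k < n \<and>
       i \<noteq> j \<and> i \<noteq> k \<and> j \<noteq> k \<and>
       (\<exists>p. p \<noteq> 0 \<and> linform (H i) p = 0 \<and> linform (H j) p = 0 \<and> linform (H k) p = 0)}"

definition multpts :: "(nat \<Rightarrow> cvec) \<Rightarrow> nat \<Rightarrow> cvec set set" where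
  "multpts H m = {projpt p | p. p \<noteq> 0 \<and> 3 \<le> card {i. i < m \<and> linform (H i) p = 0}}"

definition ptsOn :: "cvec \<Rightarrow> cvec set set" where
  "ptsOn a = {projpt p | p. p \<noteq> 0 \<and> linform a p = 0}"

definition ind_conn :: "(nat \<Rightarrow> cvec) \<Rightarrow> nat \<Rightarrow> bool" where
  "ind_conn H n \<longleftrightarrow> (\<exists>s. bij_betw s {..<n} {..<n} \<and>
     (\<forall>t<n. card (ptsOn (H (s t)) \<inter> multpts (H \<circ> s) (Suc t)) \<le> 2))"

text \<open>Realization space R(I) for n lines, as its affine cone: tuples of nonzero coefficient
  vectors (entries with index \<ge> n set to 0), pairwise non-proportional, with
  det(H_i,H_j,H_k) = 0 iff {i,j,k} \<in> I, for pairwise distinct i,j,k < n.\<close>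
definition realiz :: "nat \<Rightarrow> nat set set \<Rightarrow> (nat \<Rightarrow> cvec) set" where
  "realiz n I = {G. (\<forall>i. n \<le> i \<longrightarrow> G i = 0) \<and> (\<forall>i<n. G i \<noteq> 0) \<and>
     (\<forall>i<n. \<forall>j<n. i \<noteq> j \<longrightarrow> \<not> proj_eq (G i) (G j)) \<and>
     (\<forall>i<n. \<forall>j<n. \<forall>k<n. i \<noteq> j \<and> i \<noteq> k \<and> j \<noteq> k \<longrightarrow>
        (det3 (G i) (G j) (G k) = 0 \<longleftrightarrow> {i, j, k} \<in> I))}"

definition realizK :: "complex set \<Rightarrow> nat \<Rightarrow> nat set set \<Rightarrow> (nat \<Rightarrow> cvec) set" where
  "realizK K n I = {G \<in> realiz n I. \<forall>i j. G i $ j \<in> K}"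

inductive_set polyfun :: "((nat \<Rightarrow> cvec) \<Rightarrow> complex) set" where
  pf_const: "(\<lambda>G. c) \<in> polyfun"
| pf_var: "(\<lambda>G. G i $ j) \<in> polyfun"
| pf_add: "f \<in> polyfun \<Longrightarrow> g \<in> polyfun \<Longrightarrow> (\<lambda>G. f G + g G) \<in> polyfun"
| pf_mult: "f \<in> polyfun \<Longrightarrow> g \<in> polyfun \<Longrightarrow> (\<lambda>G. f G * g G) \<in> polyfun"

definition zariski_dense :: "(nat \<Rightarrow> cvec) set \<Rightarrow> (nat \<Rightarrow> cvec) set \<Rightarrow> bool" where
  "zariski_dense S T \<longleftrightarrow> S \<subseteq> T \<and>
     (\<forall>f\<in>polyfun. (\<forall>G\<in>S. f G = 0) \<longrightarrow> (\<forall>G\<in>T. f G = 0))"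

definition subfield_C :: "complex set \<Rightarrow> bool" where
  "subfield_C K \<longleftrightarrow> 0 \<in> K \<and> 1 \<in> K \<and> (\<forall>x\<in>K. \<forall>y\<in>K. x + y \<in> K \<and> x * y \<in> K) \<and>
     (\<forall>x\<in>K. - x \<in> K \<and> inverse x \<in> K)"

end

theory Submission
  imports Defs "HOL-Computational_Algebra.Polynomial"
begin

(* Write n = m + 1, so that H_m is the last line.  Every multiple point of the
   arrangement on H_m is an intersection point H_a \<inter> H_b of earlier lines, so by hypothesis
   there are at most two of them.  In each case (no such point, one point p, two points p and
   q) the possible last lines of a realization G of I are parametrized by a polynomial map
   Phi, with rational coefficients, of the earlier lines and an auxiliary vector u in C^3:
   Phi = u, Phi = u x p, Phi = u_1 (p x q), where x is the cross product and p, q are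
   cross products of earlier lines.  Zariski density then lifts from I' to I: a polynomial f
   vanishing on R(I)(K) is multiplied by a polynomial g with g G \<noteq> 0 expressing the open
   conditions of R(I); composed with Phi, the product vanishes on R(I')(K) x K^3, hence on
   R(I') x C^3 (a univariate polynomial with infinitely many roots is zero, and R(I')(K)
   is dense), and evaluating at a preimage of G gives f G = 0.
   The file develops the vector algebra of the cross product, polynomial functions, subfields,
   elementary facts on realization spaces, the lifting of density along a parametrization,
   the three parametrizations, and the classification of the multiple points on H_m.  The
   second part of the theorem follows by induction along an inductively connected numbering,
   starting from the empty arrangement whose realization space is trivially dense. *)


section \<open>The cross product on complex 3-space\<close>

text \<open>The cross product; the vector a \<times> b represents the intersection point of the lines
  a and b, and det(a,b,c) is the linear form a evaluated at b \<times> c.\<close>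
definition ccross :: "cvec \<Rightarrow> cvec \<Rightarrow> cvec" where
  "ccross a b = vector [a$2*b$3 - a$3*b$2, a$3*b$1 - a$1*b$3, a$1*b$2 - a$2*b$1]"

lemma ccross_nth [simp]:
  "ccross a b $ 1 = a$2*b$3 - a$3*b$2"
  "ccross a b $ 2 = a$3*b$1 - a$1*b$3"
  "ccross a b $ 3 = a$1*b$2 - a$2*b$1"
  by (simp_all add: ccross_def)

lemma linform_expand: "linform a p = a$1*p$1 + a$2*p$2 + a$3*p$3"
  by (simp add: linform_def sum_3)

lemma vec3_eq_iff: "(u::cvec) = v \<longleftrightarrow> u$1 = v$1 \<and> u$2 = v$2 \<and> u$3 = v$3"
  by (simp add: vec_eq_iff forall_3)

lemma vec3_eq_0_iff: "(u::cvec) = 0 \<longleftrightarrow> u$1 = 0 \<and> u$2 = 0 \<and> u$3 = 0"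
  by (simp add: vec3_eq_iff)

lemma det3_linform: "det3 a b c = linform a (ccross b c)"
  unfolding det3_def det_3 linform_expand by (simp add: algebra_simps)

lemma linform_commute: "linform a p = linform p a"
  by (simp add: linform_expand algebra_simps)

lemma linform_smult_right: "linform a (c *s p) = c * linform a p"
  by (simp add: linform_expand algebra_simps)

lemma linform_smult_left: "linform (c *s a) p = c * linform a p"
  by (simp add: linform_expand algebra_simps)

lemma ccross_orth: "linform a (ccross a b) = 0" "linform b (ccross a b) = 0"
  by (simp_all add: linform_expand algebra_simps)

lemma ccross_scale: "ccross (c *s a) b = c *s ccross a b"
  by (simp add: vec3_eq_iff algebra_simps)

lemma ccross_self: "ccross a a = 0"
  by (simp add: vec3_eq_iff)

lemma ccross_anticomm: "ccross a b = - ccross b a"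
  by (simp add: vec3_eq_iff)

lemma det3_repeat: "det3 a a c = 0" "det3 a b a = 0" "det3 a b b = 0"
  by (simp_all add: det3_linform linform_expand algebra_simps)

lemma det3_eq_0_perm:
  "det3 a b c = 0 \<longleftrightarrow> det3 b c a = 0" "det3 a b c = 0 \<longleftrightarrow> det3 c a b = 0"
  "det3 a b c = 0 \<longleftrightarrow> det3 a c b = 0"
  by (simp_all add: det3_linform linform_expand algebra_simps, algebra+)

lemma det3_triple_expansion:
  "det3 a b c *s p = linform p a *s ccross b c + linform p b *s ccross c a + linform p c *s ccross a b"
  by (simp add: vec3_eq_iff det3_linform linform_expand algebra_simps)

lemma det3_common_zero:
  assumes "p \<noteq> 0" "linform a p = 0" "linform b p = 0" "linform c p = 0"
  shows "det3 a b c = 0"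
  using det3_triple_expansion[of a b c p] assms by (simp add: linform_commute)

lemma ccross_ccross: "ccross p (ccross a b) = linform p b *s a - linform p a *s b"
  by (simp add: vec3_eq_iff linform_expand algebra_simps)

lemma ccross_eq_0_parallel:
  assumes "ccross x y = 0" "y \<noteq> 0"
  shows "\<exists>t. x = t *s y"
proof -
  from assms have e: "x$2*y$3 = x$3*y$2" "x$3*y$1 = x$1*y$3" "x$1*y$2 = x$2*y$1"
    by (simp_all add: vec3_eq_iff)
  from assms(2) consider "y$1 \<noteq> 0" | "y$2 \<noteq> 0" | "y$3 \<noteq> 0" by (auto simp: vec3_eq_0_iff)
  then show ?thesis
  proof cases
    case 1 show ?thesis
      by (rule exI[of _ "x$1/y$1"]) (use 1 e in \<open>simp add: vec3_eq_iff field_simps\<close>)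
  next
    case 2 show ?thesis
      by (rule exI[of _ "x$2/y$2"]) (use 2 e in \<open>simp add: vec3_eq_iff field_simps\<close>)
  next
    case 3 show ?thesis
      by (rule exI[of _ "x$3/y$3"]) (use 3 e in \<open>simp add: vec3_eq_iff field_simps\<close>)
  qed
qed

lemma common_zero_parallel:
  assumes "linform a p = 0" "linform b p = 0" "ccross a b \<noteq> 0"
  shows "\<exists>t. p = t *s ccross a b"
  using ccross_eq_0_parallel[of p "ccross a b"] ccross_ccross[of p a b] assms
  by (simp add: linform_commute)

lemma proj_eq_iff_ccross:
  assumes "a \<noteq> 0" "b \<noteq> 0"
  shows "proj_eq a b \<longleftrightarrow> ccross a b = 0"
proof
  assume "proj_eq a b"
  then obtain c where "a = c *s b" by (auto simp: proj_eq_def)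
  then show "ccross a b = 0" by (simp add: vec3_eq_iff algebra_simps)
next
  assume "ccross a b = 0"
  then obtain t where t: "a = t *s b" using ccross_eq_0_parallel assms by blast
  with assms have "t \<noteq> 0" by auto
  with t show "proj_eq a b" by (auto simp: proj_eq_def)
qed

lemma det3_eq_0_iff_concurrent:
  assumes "ccross a b \<noteq> 0"
  shows "det3 a b c = 0 \<longleftrightarrow> (\<exists>p. p \<noteq> 0 \<and> linform a p = 0 \<and> linform b p = 0 \<and> linform c p = 0)"
proof
  assume "det3 a b c = 0"
  moreover have "linform c (ccross a b) = det3 a b c"
    by (simp add: det3_linform linform_expand algebra_simps)
  ultimately show "\<exists>p. p \<noteq> 0 \<and> linform a p = 0 \<and> linform b p = 0 \<and> linform c p = 0"
    using assms ccross_orth by (intro exI[of _ "ccross a b"]) simp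
qed (use det3_common_zero in blast)

lemma line_through_is_ccross:
  assumes u: "u \<noteq> 0" and h: "linform h u = 0"
  shows "\<exists>v. ccross v u = h"
proof -
  have h': "h$1*u$1 + h$2*u$2 + h$3*u$3 = 0" using h by (simp add: linform_expand)
  from u consider "u$1 \<noteq> 0" | "u$2 \<noteq> 0" | "u$3 \<noteq> 0" by (auto simp: vec3_eq_0_iff)
  then show ?thesis
  proof cases
    case 1
    then have e: "h$1 = -(h$2*u$2+h$3*u$3)/u$1" using h' by (simp add: field_simps add_eq_0_iff)
    show ?thesis
      by (rule exI[of _ "vector [0, - h$3/u$1, h$2/u$1]"])
        (use 1 e in \<open>simp add: vec3_eq_iff field_simps, algebra\<close>)
  next
    case 2
    then have e: "h$2 = -(h$1*u$1+h$3*u$3)/u$2" using h' by (simp add: field_simps add_eq_0_iff)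
    show ?thesis
      by (rule exI[of _ "vector [h$3/u$2, 0, - h$1/u$2]"])
        (use 2 e in \<open>simp add: vec3_eq_iff field_simps\<close>)
  next
    case 3
    then have e: "h$3 = -(h$1*u$1+h$2*u$2)/u$3" using h' by (simp add: field_simps add_eq_0_iff)
    show ?thesis
      by (rule exI[of _ "vector [- h$2/u$3, h$1/u$3, 0]"])
        (use 3 e in \<open>simp add: vec3_eq_iff field_simps, algebra\<close>)
  qed
qed

lemma projpt_scale:
  assumes c: "c \<noteq> 0"
  shows "projpt (c *s y) = projpt y"
  unfolding projpt_def
proof (intro set_eqI iffI)
  fix x assume "x \<in> range (\<lambda>d. d *s (c *s y))"
  then obtain d where "x = d *s (c *s y)" by blast
  then have "x = (d * c) *s y" by (simp add: vector_smult_assoc)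
  then show "x \<in> range (\<lambda>d. d *s y)" by blast
next
  fix x assume "x \<in> range (\<lambda>d. d *s y)"
  then obtain d where "x = d *s y" by blast
  then have "x = (d / c) *s (c *s y)" using c by (simp add: vector_smult_assoc)
  then show "x \<in> range (\<lambda>d. d *s (c *s y))" by blast
qed

lemma projpt_eq_parallel: "projpt x = projpt y \<Longrightarrow> \<exists>d. x = d *s y"
proof -
  assume e: "projpt x = projpt y"
  have "x \<in> projpt x" unfolding projpt_def by (rule range_eqI[of _ _ 1]) simp
  then show ?thesis using e unfolding projpt_def by auto
qed

lemma ccross_if_projpt_ne:
  assumes "projpt x \<noteq> projpt y" "x \<noteq> 0" "y \<noteq> 0"
  shows "ccross x y \<noteq> 0"
proof
  assume "ccross x y = 0"
  then obtain s where s: "x = s *s y" using ccross_eq_0_parallel assms(3) by blast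
  then have "s \<noteq> 0" using assms(2) by auto
  then show False using s projpt_scale assms(1) by simp
qed


section \<open>Polynomial functions\<close>

lemma pf_diff: "f \<in> polyfun \<Longrightarrow> g \<in> polyfun \<Longrightarrow> (\<lambda>G. f G - g G) \<in> polyfun"
  using pf_add[OF _ pf_mult[OF pf_const, of g "-1"], of f] by simp

lemma pf_prod:
  "finite A \<Longrightarrow> (\<And>a. a \<in> A \<Longrightarrow> f a \<in> polyfun) \<Longrightarrow> (\<lambda>G. \<Prod>a\<in>A. f a G) \<in> polyfun"
proof (induction A rule: finite_induct)
  case empty then show ?case by (simp add: pf_const)
next
  case (insert x F)
  then have "(\<lambda>G. f x G * (\<Prod>a\<in>F. f a G)) \<in> polyfun" by (intro pf_mult) auto
  with insert show ?case by simp
qed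

lemma pf_subst:
  assumes "f \<in> polyfun" "\<And>i j. (\<lambda>G. \<sigma> G i $ j) \<in> polyfun"
  shows "(\<lambda>G. f (\<sigma> G)) \<in> polyfun"
  using assms(1)
proof induction
  case (pf_const c) then show ?case by (rule polyfun.pf_const)
next
  case (pf_var i j) then show ?case using assms(2) by simp
next
  case (pf_add f g) then show ?case using polyfun.pf_add[of "\<lambda>G. f (\<sigma> G)" "\<lambda>G. g (\<sigma> G)"] by simp
next
  case (pf_mult f g) then show ?case using polyfun.pf_mult[of "\<lambda>G. f (\<sigma> G)" "\<lambda>G. g (\<sigma> G)"] by simp
qed

lemma pf_ccross:
  assumes "\<And>j. (\<lambda>G. a G $ j) \<in> polyfun" "\<And>j. (\<lambda>G. b G $ j) \<in> polyfun"
  shows "(\<lambda>G. ccross (a G) (b G) $ j) \<in> polyfun"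
proof -
  have "j = 1 \<or> j = 2 \<or> j = 3" using exhaust_3 by blast
  then show ?thesis using assms by (auto intro!: pf_diff pf_mult)
qed

lemma pf_det3:
  assumes "\<And>j. (\<lambda>G. a G $ j) \<in> polyfun" "\<And>j. (\<lambda>G. b G $ j) \<in> polyfun"
    "\<And>j. (\<lambda>G. c G $ j) \<in> polyfun"
  shows "(\<lambda>G. det3 (a G) (b G) (c G)) \<in> polyfun"
  unfolding det3_linform linform_expand by (intro pf_add pf_mult assms pf_ccross)

lemma pf_update:
  assumes "\<And>j. (\<lambda>X. \<Phi> X $ j) \<in> polyfun"
  shows "(\<lambda>X. (X(m := \<Phi> X)) i $ j) \<in> polyfun"
  using assms pf_var[of i j] by (cases "i = m") simp_all

definition vec_upd :: "cvec \<Rightarrow> 3 \<Rightarrow> complex \<Rightarrow> cvec" where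
  "vec_upd v j x = (\<chi> k. if k = j then x else v $ k)"

lemma vec_upd_same: "vec_upd v j (v $ j) = v"
  by (simp add: vec_upd_def vec_eq_iff)

lemma pf_coordinate_line:
  assumes "f \<in> polyfun"
  shows "\<exists>p. \<forall>x. f (G(i := vec_upd (G i) j x)) = poly p x"
  using assms
proof induction
  case (pf_const c) then show ?case by (intro exI[of _ "[:c:]"]) simp
next
  case (pf_var i' j')
  show ?case
  proof (cases "i' = i \<and> j' = j")
    case True then show ?thesis by (intro exI[of _ "[:0,1:]"]) (simp add: vec_upd_def)
  next
    case False then show ?thesis
      by (intro exI[of _ "[:G i' $ j':]"]) (auto simp add: vec_upd_def)
  qed
next
  case (pf_add f g)
  then obtain p q where "\<forall>x. f (G(i := vec_upd (G i) j x)) = poly p x"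
    "\<forall>x. g (G(i := vec_upd (G i) j x)) = poly q x" by blast
  then show ?case by (metis poly_add)
next
  case (pf_mult f g)
  then obtain p q where "\<forall>x. f (G(i := vec_upd (G i) j x)) = poly p x"
    "\<forall>x. g (G(i := vec_upd (G i) j x)) = poly q x" by blast
  then show ?case by (metis poly_mult)
qed

text \<open>A polynomial function vanishing when one vector variable ranges over K^3, K infinite,
  vanishes for all values of that variable (induction on the number of coordinates
  already freed from K).\<close>
lemma pf_vanish_on_K_vector:
  assumes K: "infinite K" and f: "f \<in> polyfun"
    and van: "\<And>u. \<forall>j. u $ j \<in> K \<Longrightarrow> f (G(i := u)) = 0"
  shows "f (G(i := u)) = 0"
proof -
  have "\<forall>u. (\<forall>j. u $ j \<in> K \<or> j \<in> J) \<longrightarrow> f (G(i := u)) = 0" if "finite J" for J :: "3 set"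
    using that
  proof (induction J rule: finite_induct)
    case empty then show ?case using van by blast
  next
    case (insert j J)
    show ?case
    proof (intro allI impI)
      fix u :: cvec assume u: "\<forall>j'. u $ j' \<in> K \<or> j' \<in> insert j J"
      obtain p where p: "\<forall>x. f ((G(i := u))(i := vec_upd u j x)) = poly p x"
        using pf_coordinate_line[OF f, of "G(i := u)" i j] by auto
      have "poly p x = 0" if "x \<in> K" for x
      proof -
        have "\<forall>j'. vec_upd u j x $ j' \<in> K \<or> j' \<in> J" using u that by (auto simp: vec_upd_def)
        then have "f (G(i := vec_upd u j x)) = 0" using insert.IH by blast
        then show ?thesis using p by simp
      qed
      then have roots: "K \<subseteq> {x. poly p x = 0}" by blast
      have "p = 0"
      proof (rule ccontr)
        assume "p \<noteq> 0"
        then have "finite K" using poly_roots_finite roots finite_subset by blast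
        then show False using K by contradiction
      qed
      then show "f (G(i := u)) = 0" using p[rule_format, of "u $ j"] by (simp add: vec_upd_same)
    qed
  qed
  from this[of UNIV] show ?thesis by simp
qed

lemma vec_nonzero_coordinate: "(v :: cvec) \<noteq> 0 \<Longrightarrow> \<exists>j. v $ j \<noteq> 0"
  by (auto simp: vec_eq_iff)


section \<open>Subfields of the complex numbers\<close>

text \<open>A subfield contains the natural numbers and is therefore infinite, which is what the
  vanishing argument for polynomials needs; it is closed under the cross product.\<close>
lemma subfield_of_nat: "subfield_C K \<Longrightarrow> of_nat k \<in> K"
  by (induction k) (auto simp: subfield_C_def)

lemma subfield_infinite:
  assumes "subfield_C K"
  shows "infinite K"
proof
  assume "finite K"
  moreover have "range (of_nat :: nat \<Rightarrow> complex) \<subseteq> K" using subfield_of_nat[OF assms] by auto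
  ultimately have "finite (range (of_nat :: nat \<Rightarrow> complex))" using finite_subset by blast
  then show False using range_inj_infinite[of "of_nat :: nat \<Rightarrow> complex"] by (simp add: inj_def)
qed

lemma subfield_ccross:
  assumes K: "subfield_C K" and "\<forall>j. a $ j \<in> K" "\<forall>j. b $ j \<in> K"
  shows "\<forall>j. ccross a b $ j \<in> K"
proof -
  have diff: "x - y \<in> K" if "x \<in> K" "y \<in> K" for x y
    using K that unfolding subfield_C_def by (metis diff_conv_add_uminus)
  have mult: "x * y \<in> K" if "x \<in> K" "y \<in> K" for x y using K that by (simp add: subfield_C_def)
  show ?thesis
  proof
    fix j :: 3
    have "j = 1 \<or> j = 2 \<or> j = 3" using exhaust_3 by blast
    then show "ccross a b $ j \<in> K" using assms mult by (auto intro!: diff)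
  qed
qed

lemma subfield_Rats: "subfield_C \<rat>"
  unfolding subfield_C_def by auto


section \<open>Realization spaces\<close>

lemma incidence_iff_concurrent:
  assumes "i < n" "j < n" "k < n" "i \<noteq> j" "i \<noteq> k" "j \<noteq> k"
  shows "{i,j,k} \<in> incidence H n \<longleftrightarrow>
    (\<exists>p. p \<noteq> 0 \<and> linform (H i) p = 0 \<and> linform (H j) p = 0 \<and> linform (H k) p = 0)"
proof
  assume "{i,j,k} \<in> incidence H n"
  then obtain i' j' k' p where e: "{i,j,k} = {i',j',k'}" and
    p: "p \<noteq> 0" "linform (H i') p = 0" "linform (H j') p = 0" "linform (H k') p = 0"
    unfolding incidence_def by blast
  have "linform (H x) p = 0" if "x \<in> {i,j,k}" for x
    using that e p by auto
  then show "\<exists>p. p \<noteq> 0 \<and> linform (H i) p = 0 \<and> linform (H j) p = 0 \<and> linform (H k) p = 0"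
    using p(1) by auto
qed (use assms in \<open>auto simp: incidence_def\<close>)

lemma arrangement_ccross:
  "arrangement H n \<Longrightarrow> i < n \<Longrightarrow> j < n \<Longrightarrow> i \<noteq> j \<Longrightarrow> ccross (H i) (H j) \<noteq> 0"
  unfolding arrangement_def using proj_eq_iff_ccross by auto

lemma realiz_ccross:
  "G \<in> realiz n I \<Longrightarrow> i < n \<Longrightarrow> j < n \<Longrightarrow> i \<noteq> j \<Longrightarrow> ccross (G i) (G j) \<noteq> 0"
  unfolding realiz_def using proj_eq_iff_ccross by auto

lemma arrangement_prefix: "arrangement H n \<Longrightarrow> m \<le> n \<Longrightarrow> arrangement H m"
  unfolding arrangement_def by auto

lemma incidence_iff_det3:
  assumes "arrangement H n" "i < n" "j < n" "k < n" "i \<noteq> j" "i \<noteq> k" "j \<noteq> k"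
  shows "{i,j,k} \<in> incidence H n \<longleftrightarrow> det3 (H i) (H j) (H k) = 0"
  using incidence_iff_concurrent[OF assms(2-7)]
    det3_eq_0_iff_concurrent[OF arrangement_ccross[OF assms(1,2,3,5)]] by simp

lemma realiz_det3_iff:
  assumes "arrangement H n" "G \<in> realiz n (incidence H n)" "a < n" "b < n" "c < n"
  shows "det3 (G a) (G b) (G c) = 0 \<longleftrightarrow> det3 (H a) (H b) (H c) = 0"
proof (cases "a \<noteq> b \<and> a \<noteq> c \<and> b \<noteq> c")
  case True
  then have "det3 (G a) (G b) (G c) = 0 \<longleftrightarrow> {a,b,c} \<in> incidence H n"
    using assms(2-5) unfolding realiz_def by blast
  then show ?thesis using incidence_iff_det3[OF assms(1,3,4,5)] True by simp
qed (auto simp: det3_repeat)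

lemma realiz_through:
  assumes "arrangement H n" "G \<in> realiz n (incidence H n)" "a < n" "i < n" "j < n"
    "det3 (H a) (H i) (H j) = 0"
  shows "linform (G a) (ccross (G i) (G j)) = 0"
  using realiz_det3_iff[OF assms(1-5)] assms(6) by (simp add: det3_linform)

lemma realiz_pencil_concurrent:
  assumes arr: "arrangement H n" and G: "G \<in> realiz n (incidence H n)"
    and ab: "a < n" "b < n" and ij: "i < n" "j < n" "i \<noteq> j"
    and "det3 (H a) (H i) (H j) = 0" "det3 (H b) (H i) (H j) = 0"
    and h: "linform h (ccross (G i) (G j)) = 0"
  shows "det3 (G a) (G b) h = 0"
  using det3_common_zero[OF realiz_ccross[OF G ij] _ _ h] realiz_through[OF arr G] assms by blast

lemma realiz_distinct_points:
  assumes arr: "arrangement H n" and G: "G \<in> realiz n (incidence H n)"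
    and ij: "i < n" "j < n" "i \<noteq> j" and kl: "k < n" "l < n" "k \<noteq> l"
    and pq: "ccross (ccross (H i) (H j)) (ccross (H k) (H l)) \<noteq> 0"
  shows "ccross (ccross (G i) (G j)) (ccross (G k) (G l)) \<noteq> 0"
proof
  let ?p = "ccross (G i) (G j)" and ?q = "ccross (G k) (G l)"
  assume "ccross ?p ?q = 0"
  then obtain s where "?p = s *s ?q" using ccross_eq_0_parallel realiz_ccross[OF G kl] by blast
  then have "linform (G k) ?p = 0" "linform (G l) ?p = 0"
    by (simp_all add: linform_smult_right ccross_orth)
  then have "linform (H k) (ccross (H i) (H j)) = 0" "linform (H l) (ccross (H i) (H j)) = 0"
    using realiz_det3_iff[OF arr G] ij kl by (auto simp: det3_linform)
  then obtain t where "ccross (H i) (H j) = t *s ccross (H k) (H l)"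
    using common_zero_parallel[OF _ _ arrangement_ccross[OF arr kl]] by (metis linform_commute)
  then show False using pq by (simp add: ccross_scale ccross_self)
qed

lemma arrangement_in_realiz:
  assumes "arrangement H n"
  shows "(\<lambda>i. if i < n then H i else 0) \<in> realiz n (incidence H n)"
  using assms incidence_iff_det3[OF assms] unfolding realiz_def arrangement_def by auto

lemma realizK_subset: "realizK K n I \<subseteq> realiz n I"
  unfolding realizK_def by auto

lemma zariski_dense_vanish:
  "zariski_dense S T \<Longrightarrow> p \<in> polyfun \<Longrightarrow> (\<And>X. X \<in> S \<Longrightarrow> p X = 0) \<Longrightarrow> X \<in> T \<Longrightarrow> p X = 0"
  unfolding zariski_dense_def by blast

lemma dense_nonempty: "zariski_dense S T \<Longrightarrow> T \<noteq> {} \<Longrightarrow> S \<noteq> {}"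
  unfolding zariski_dense_def using pf_const[of 1] by fastforce

lemma realiz_restrict:
  assumes arr: "arrangement H (Suc m)" and G: "G \<in> realiz (Suc m) (incidence H (Suc m))"
  shows "G(m := 0) \<in> realiz m (incidence H m)"
proof -
  have arr': "arrangement H m" using arrangement_prefix[OF arr] by simp
  have "det3 (G i) (G j) (G k) = 0 \<longleftrightarrow> {i,j,k} \<in> incidence H m"
    if "i < m" "j < m" "k < m" "i \<noteq> j" "i \<noteq> k" "j \<noteq> k" for i j k
    using realiz_det3_iff[OF arr G, of i j k] incidence_iff_det3[OF arr' that] that by simp
  then show ?thesis using G unfolding realiz_def by auto
qed

lemma realiz_extend_distinct:
  assumes G': "G' \<in> realiz m I" and h0: "h \<noteq> 0" and hc: "\<forall>i<m. ccross h (G' i) \<noteq> 0"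
    and ij: "i < Suc m" "j < Suc m" "i \<noteq> j"
  shows "\<not> proj_eq ((G'(m := h)) i) ((G'(m := h)) j)"
proof -
  have G'0: "G' i \<noteq> 0" if "i < m" for i using G' that unfolding realiz_def by auto
  consider "i = m" "j < m" | "j = m" "i < m" | "i < m" "j < m"
    using ij unfolding less_Suc_eq by blast
  then show ?thesis
  proof cases
    case 1 then show ?thesis using hc h0 G'0 proj_eq_iff_ccross by auto
  next
    case 2 then show ?thesis
      using hc h0 G'0 proj_eq_iff_ccross ccross_anticomm[of "G' i" h] by auto
  qed (use G' ij in \<open>auto simp: realiz_def\<close>)
qed

definition free_pairs :: "(nat \<Rightarrow> cvec) \<Rightarrow> nat \<Rightarrow> (nat \<times> nat) set" where
  "free_pairs H m = {(a, b). a < m \<and> b < m \<and> a \<noteq> b \<and> det3 (H a) (H b) (H m) \<noteq> 0}"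

lemma finite_free_pairs: "finite (free_pairs H m)"
  unfolding free_pairs_def by (rule finite_subset[of _ "{..<m} \<times> {..<m}"]) auto

lemma realiz_extend:
  assumes arr: "arrangement H (Suc m)" and G': "G' \<in> realiz m (incidence H m)"
    and h0: "h \<noteq> 0" and hc: "\<forall>i<m. ccross h (G' i) \<noteq> 0"
    and conc: "\<forall>a b. a < m \<longrightarrow> b < m \<longrightarrow> a \<noteq> b \<longrightarrow> det3 (H a) (H b) (H m) = 0 \<longrightarrow>
                 det3 (G' a) (G' b) h = 0"
    and free: "\<forall>(a, b)\<in>free_pairs H m. det3 (G' a) (G' b) h \<noteq> 0"
  shows "G'(m := h) \<in> realiz (Suc m) (incidence H (Suc m))"
proof -
  have arr': "arrangement H m" using arrangement_prefix[OF arr] by simp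
  let ?X = "G'(m := h)"
  have hd: "det3 (G' a) (G' b) h = 0 \<longleftrightarrow> det3 (H a) (H b) (H m) = 0"
    if "a < m" "b < m" "a \<noteq> b" for a b
    using conc free that unfolding free_pairs_def by blast
  have dd: "det3 (?X i) (?X j) (?X k) = 0 \<longleftrightarrow> det3 (H i) (H j) (H k) = 0"
    if a: "i < Suc m" "j < Suc m" "k < Suc m" "i \<noteq> j" "i \<noteq> k" "j \<noteq> k" for i j k
  proof -
    consider "i = m" | "j = m" | "k = m" | "i < m" "j < m" "k < m"
      using a(1-3) unfolding less_Suc_eq by blast
    then show ?thesis
    proof cases
      case 1
      then have "j < m" "k < m" using a by auto
      then show ?thesis using 1 hd a det3_eq_0_perm(1)[of h "G' j" "G' k"]
          det3_eq_0_perm(1)[of "H m" "H j" "H k"] by simp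
    next
      case 2
      then have "i < m" "k < m" using a by auto
      then show ?thesis using 2 hd a det3_eq_0_perm(3)[of "G' i" h "G' k"]
          det3_eq_0_perm(3)[of "H i" "H m" "H k"] by simp
    next
      case 3
      then have "i < m" "j < m" using a by auto
      then show ?thesis using 3 hd a by simp
    next
      case 4 then show ?thesis using realiz_det3_iff[OF arr' G', of i j k] by simp
    qed
  qed
  have "\<forall>i. Suc m \<le> i \<longrightarrow> ?X i = 0" using G' unfolding realiz_def by auto
  moreover have "\<forall>i<Suc m. ?X i \<noteq> 0" using G' h0 unfolding realiz_def by (auto simp: less_Suc_eq)
  ultimately show ?thesis
    using realiz_extend_distinct[OF G' h0 hc] dd incidence_iff_det3[OF arr]
    unfolding realiz_def by auto
qed

text \<open>The open conditions on the last line X_m of a configuration X (X_m nonzero, distinct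
  from X_0, ..., X_{m-1}, and not concurrent with the pairs in D), when satisfied at G, are
  witnessed by one polynomial g with g G \<noteq> 0: a product of nonvanishing coordinates.\<close>
lemma last_line_open_polynomial:
  assumes finD: "finite D" and Gm: "G m \<noteq> 0" and Gc: "\<forall>i<m. ccross (G m) (G i) \<noteq> 0"
    and Gd: "\<forall>(a, b)\<in>D. det3 (G a) (G b) (G m) \<noteq> 0"
  shows "\<exists>g\<in>polyfun. g G \<noteq> 0 \<and> (\<forall>X. g X \<noteq> 0 \<longrightarrow> X m \<noteq> 0 \<and>
    (\<forall>i<m. ccross (X m) (X i) \<noteq> 0) \<and> (\<forall>(a, b)\<in>D. det3 (X a) (X b) (X m) \<noteq> 0))"
proof -
  obtain j0 where j0: "G m $ j0 \<noteq> 0" using vec_nonzero_coordinate[OF Gm] by blast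
  have "\<exists>j. ccross (G m) (G i) $ j \<noteq> 0" if "i < m" for i
    using vec_nonzero_coordinate[of "ccross (G m) (G i)"] Gc that by blast
  then obtain c where c: "\<And>i. i < m \<Longrightarrow> ccross (G m) (G i) $ c i \<noteq> 0" by metis
  define g where "g X = X m $ j0 * (\<Prod>i<m. ccross (X m) (X i) $ c i) *
    (\<Prod>(a, b)\<in>D. det3 (X a) (X b) (X m))" for X
  have g_nz: "g X \<noteq> 0 \<longleftrightarrow> X m $ j0 \<noteq> 0 \<and> (\<forall>i<m. ccross (X m) (X i) $ c i \<noteq> 0) \<and>
      (\<forall>(a, b)\<in>D. det3 (X a) (X b) (X m) \<noteq> 0)" for X
    unfolding g_def using finD by auto
  have crossprod: "(\<lambda>X. \<Prod>i<m. ccross (X m) (X i) $ c i) \<in> polyfun"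
    by (intro pf_prod pf_ccross pf_var) auto
  have detprod: "(\<lambda>X. \<Prod>(a, b)\<in>D. det3 (X a) (X b) (X m)) \<in> polyfun"
  proof (rule pf_prod[OF finD])
    fix ab :: "nat \<times> nat"
    show "(\<lambda>X. case ab of (a, b) \<Rightarrow> det3 (X a) (X b) (X m)) \<in> polyfun"
      by (cases ab) (simp add: pf_det3 pf_var)
  qed
  have "g \<in> polyfun"
    unfolding g_def[abs_def] by (intro pf_mult pf_var crossprod detprod)
  moreover have "g G \<noteq> 0" unfolding g_nz using j0 c Gd by blast
  moreover have "X m \<noteq> 0 \<and> (\<forall>i<m. ccross (X m) (X i) \<noteq> 0)" if "g X \<noteq> 0" for X
  proof -
    have "X m $ j0 \<noteq> 0" "\<forall>i<m. ccross (X m) (X i) $ c i \<noteq> 0" using that unfolding g_nz by blast+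
    then show ?thesis by (metis zero_index)
  qed
  ultimately show ?thesis using g_nz by blast
qed

lemma realiz_open_witness:
  assumes arr: "arrangement H (Suc m)" and G: "G \<in> realiz (Suc m) (incidence H (Suc m))"
  shows "\<exists>g\<in>polyfun. g G \<noteq> 0 \<and> (\<forall>G' h. G' \<in> realiz m (incidence H m) \<longrightarrow>
    g (G'(m := h)) \<noteq> 0 \<longrightarrow>
    (\<forall>a b. a < m \<longrightarrow> b < m \<longrightarrow> a \<noteq> b \<longrightarrow> det3 (H a) (H b) (H m) = 0 \<longrightarrow>
       det3 (G' a) (G' b) h = 0) \<longrightarrow>
    G'(m := h) \<in> realiz (Suc m) (incidence H (Suc m)))"
proof -
  have "G m \<noteq> 0" using G unfolding realiz_def by simp
  moreover have "\<forall>i<m. ccross (G m) (G i) \<noteq> 0"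
    using realiz_ccross[OF G, of m] by simp
  moreover have "\<forall>(a, b)\<in>free_pairs H m. det3 (G a) (G b) (G m) \<noteq> 0"
    using realiz_det3_iff[OF arr G] unfolding free_pairs_def by simp
  ultimately obtain g where g: "g \<in> polyfun" "g G \<noteq> 0"
    and g_open: "\<forall>X. g X \<noteq> 0 \<longrightarrow> X m \<noteq> 0 \<and> (\<forall>i<m. ccross (X m) (X i) \<noteq> 0) \<and>
      (\<forall>(a, b)\<in>free_pairs H m. det3 (X a) (X b) (X m) \<noteq> 0)"
    using last_line_open_polynomial[OF finite_free_pairs] by blast
  have "G'(m := h) \<in> realiz (Suc m) (incidence H (Suc m))"
    if G': "G' \<in> realiz m (incidence H m)" and nz: "g (G'(m := h)) \<noteq> 0"
      and conc: "\<forall>a b. a < m \<longrightarrow> b < m \<longrightarrow> a \<noteq> b \<longrightarrow> det3 (H a) (H b) (H m) = 0 \<longrightarrow>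
         det3 (G' a) (G' b) h = 0" for G' h
  proof (rule realiz_extend[OF arr G' _ _ conc])
    note X = g_open[rule_format, OF nz]
    show "h \<noteq> 0" "\<forall>i<m. ccross h (G' i) \<noteq> 0" using X by simp_all
    show "\<forall>(a, b)\<in>free_pairs H m. det3 (G' a) (G' b) h \<noteq> 0"
      using X unfolding free_pairs_def by auto
  qed
  then show ?thesis using g by (intro bexI[of _ g]) auto
qed


section \<open>Lifting Zariski density along a parametrization of the last line\<close>

text \<open>A parametrization of the last line of realizations: a polynomial map Phi of the
  earlier lines and a free vector variable (stored in slot m) which is K-rational on
  K-points, always produces the concurrences prescribed by A, and reaches the last line of
  every realization of I.\<close>
definition line_param :: "complex set \<Rightarrow> (nat \<Rightarrow> cvec) \<Rightarrow> nat \<Rightarrow> ((nat \<Rightarrow> cvec) \<Rightarrow> cvec) \<Rightarrow> bool"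
  where "line_param K H m \<Phi> \<longleftrightarrow>
    (\<forall>j. (\<lambda>X. \<Phi> X $ j) \<in> polyfun) \<and>
    (\<forall>G' u. G' \<in> realizK K m (incidence H m) \<longrightarrow> (\<forall>j. u $ j \<in> K) \<longrightarrow>
       (\<forall>j. \<Phi> (G'(m := u)) $ j \<in> K)) \<and>
    (\<forall>G' u a b. G' \<in> realiz m (incidence H m) \<longrightarrow> a < m \<longrightarrow> b < m \<longrightarrow> a \<noteq> b \<longrightarrow>
       det3 (H a) (H b) (H m) = 0 \<longrightarrow> det3 (G' a) (G' b) (\<Phi> (G'(m := u))) = 0) \<and>
    (\<forall>G \<in> realiz (Suc m) (incidence H (Suc m)). \<exists>u. \<Phi> (G(m := u)) = G m)"

lemma dense_times_K_vector:
  assumes K: "infinite K" and dense: "zariski_dense S T" and f: "f \<in> polyfun"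
    and van: "\<And>G' u. G' \<in> S \<Longrightarrow> \<forall>j. u $ j \<in> K \<Longrightarrow> f (G'(m := u)) = 0"
    and G: "G \<in> T"
  shows "f (G(m := u)) = 0"
proof -
  have "(\<lambda>Y. (Y(m := u)) i $ j) \<in> polyfun" for i j
    by (cases "i = m") (simp_all add: pf_const pf_var)
  then have "(\<lambda>Y. f (Y(m := u))) \<in> polyfun" by (rule pf_subst[OF f])
  moreover have "f (Y(m := u)) = 0" if "Y \<in> S" for Y
    using pf_vanish_on_K_vector[OF K f van[OF that]] .
  ultimately show ?thesis using zariski_dense_vanish[OF dense _ _ G] by blast
qed

lemma line_paramD:
  assumes "line_param K H m \<Phi>"
  shows "\<And>j. (\<lambda>X. \<Phi> X $ j) \<in> polyfun"
    and "\<And>G' u. G' \<in> realizK K m (incidence H m) \<Longrightarrow> \<forall>j. u $ j \<in> K \<Longrightarrow>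
           \<forall>j. \<Phi> (G'(m := u)) $ j \<in> K"
    and "\<And>G' u. G' \<in> realiz m (incidence H m) \<Longrightarrow> \<forall>a b. a < m \<longrightarrow> b < m \<longrightarrow> a \<noteq> b \<longrightarrow>
           det3 (H a) (H b) (H m) = 0 \<longrightarrow> det3 (G' a) (G' b) (\<Phi> (G'(m := u))) = 0"
    and "\<And>G. G \<in> realiz (Suc m) (incidence H (Suc m)) \<Longrightarrow> \<exists>u. \<Phi> (G(m := u)) = G m"
  using assms unfolding line_param_def by blast+

text \<open>It is multiplied by the witness g of the open conditions at G and composed with the
  parametrization; the product vanishes on R(I')(K) \<times> K^3, hence everywhere, in particular
  at a preimage of G, where g does not vanish.\<close>
lemma line_param_vanish:
  assumes K: "subfield_C K" and arr: "arrangement H (Suc m)"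
    and dense: "zariski_dense (realizK K m (incidence H m)) (realiz m (incidence H m))"
    and param: "line_param K H m \<Phi>"
    and f: "f \<in> polyfun" and fS: "\<forall>X\<in>realizK K (Suc m) (incidence H (Suc m)). f X = 0"
    and G: "G \<in> realiz (Suc m) (incidence H (Suc m))"
  shows "f G = 0"
proof -
  let ?S' = "realizK K m (incidence H m)" and ?T' = "realiz m (incidence H m)"
  let ?T = "realiz (Suc m) (incidence H (Suc m))"
  obtain g where g: "g \<in> polyfun" "g G \<noteq> 0" and
    gT: "\<And>G' h. G' \<in> ?T' \<Longrightarrow> g (G'(m := h)) \<noteq> 0 \<Longrightarrow>
      \<forall>a b. a < m \<longrightarrow> b < m \<longrightarrow> a \<noteq> b \<longrightarrow> det3 (H a) (H b) (H m) = 0 \<longrightarrow>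
         det3 (G' a) (G' b) h = 0 \<Longrightarrow> G'(m := h) \<in> ?T"
    using realiz_open_witness[OF arr G] by blast
  define \<sigma> where "\<sigma> X = X(m := \<Phi> X)" for X
  define F where "F X = f (\<sigma> X) * g (\<sigma> X)" for X
  have "(\<lambda>X. \<sigma> X i $ j) \<in> polyfun" for i j
    unfolding \<sigma>_def by (rule pf_update[OF line_paramD(1)[OF param]])
  then have Fpf: "F \<in> polyfun"
    unfolding F_def[abs_def] by (intro pf_mult pf_subst[OF f] pf_subst[OF g(1)])
  have Fvan: "F (G'(m := u)) = 0" if G': "G' \<in> ?S'" and u: "\<forall>j. u $ j \<in> K" for G' u
  proof (cases "g (\<sigma> (G'(m := u))) = 0")
    case False
    define h where "h = \<Phi> (G'(m := u))"
    have G'T: "G' \<in> ?T'" using G' realizK_subset by blast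
    have "\<sigma> (G'(m := u)) = G'(m := h)" unfolding \<sigma>_def h_def by simp
    then have "G'(m := h) \<in> ?T"
      using gT[OF G'T] False line_paramD(3)[OF param G'T, of u] unfolding h_def by simp
    moreover have "\<forall>i j. (G'(m := h)) i $ j \<in> K"
      using G' line_paramD(2)[OF param G' u] unfolding realizK_def h_def by simp
    ultimately have "f (G'(m := h)) = 0" using fS unfolding realizK_def by blast
    then show ?thesis unfolding F_def \<sigma>_def h_def by simp
  qed (simp add: F_def)
  obtain u where u: "\<Phi> (G(m := u)) = G m" using line_paramD(4)[OF param G] by blast
  have "F ((G(m := 0))(m := u)) = 0"
    by (rule dense_times_K_vector[OF subfield_infinite[OF K] dense Fpf Fvan realiz_restrict[OF arr G]])
  then have "F (G(m := u)) = 0" by simp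
  moreover have "\<sigma> (G(m := u)) = G" unfolding \<sigma>_def u by simp
  ultimately show "f G = 0" using g(2) unfolding F_def by simp
qed

lemma dense_step:
  assumes "subfield_C K" "arrangement H (Suc m)"
    "zariski_dense (realizK K m (incidence H m)) (realiz m (incidence H m))"
    "line_param K H m \<Phi>"
  shows "zariski_dense (realizK K (Suc m) (incidence H (Suc m))) (realiz (Suc m) (incidence H (Suc m)))"
  unfolding zariski_dense_def using line_param_vanish[OF assms] realizK_subset by blast


section \<open>The three parametrizations\<close>

lemma line_param_free:
  assumes "\<forall>a b. a < m \<longrightarrow> b < m \<longrightarrow> a \<noteq> b \<longrightarrow> det3 (H a) (H b) (H m) \<noteq> 0"
  shows "line_param K H m (\<lambda>X. X m)"
  unfolding line_param_def using assms pf_var by (auto intro!: exI[of _ "_ m"])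

lemma line_param_pencil:
  assumes K: "subfield_C K" and arr: "arrangement H (Suc m)"
    and ij: "i < m" "j < m" "i \<noteq> j" "det3 (H i) (H j) (H m) = 0"
    and through: "\<forall>a b. a < m \<longrightarrow> b < m \<longrightarrow> a \<noteq> b \<longrightarrow> det3 (H a) (H b) (H m) = 0 \<longrightarrow>
              det3 (H a) (H i) (H j) = 0 \<and> det3 (H b) (H i) (H j) = 0"
  shows "line_param K H m (\<lambda>X. ccross (X m) (ccross (X i) (X j)))"
  unfolding line_param_def
proof (intro conjI allI impI ballI)
  have arr': "arrangement H m" using arrangement_prefix[OF arr] by simp
  have im: "i \<noteq> m" "j \<noteq> m" using ij by auto
  show "(\<lambda>X. ccross (X m) (ccross (X i) (X j)) $ k) \<in> polyfun" for k
    by (intro pf_ccross pf_var)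
  show "ccross ((G'(m := u)) m) (ccross ((G'(m := u)) i) ((G'(m := u)) j)) $ k \<in> K"
    if G': "G' \<in> realizK K m (incidence H m)" and u: "\<forall>k. u $ k \<in> K" for G' and u :: cvec and k
    using G' u im subfield_ccross[OF K] unfolding realizK_def by simp
  fix G' and u :: cvec and a b
  assume G': "G' \<in> realiz m (incidence H m)" and ab: "a < m" "b < m" "a \<noteq> b"
    "det3 (H a) (H b) (H m) = 0"
  let ?p = "ccross (G' i) (G' j)"
  have "linform (ccross u ?p) ?p = 0" by (simp add: ccross_orth linform_commute)
  then have "det3 (G' a) (G' b) (ccross u ?p) = 0"
    using realiz_pencil_concurrent[OF arr' G' ab(1,2) ij(1-3)] through ab by blast
  then show "det3 (G' a) (G' b) (ccross ((G'(m := u)) m) (ccross ((G'(m := u)) i) ((G'(m := u)) j))) = 0"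
    using im by simp
next
  fix G assume G: "G \<in> realiz (Suc m) (incidence H (Suc m))"
  have im: "i \<noteq> m" "j \<noteq> m" using ij by auto
  have "linform (G m) (ccross (G i) (G j)) = 0"
    using realiz_through[OF arr G, of m i j] ij det3_eq_0_perm(2)[of "H i"] by simp
  then obtain v where "ccross v (ccross (G i) (G j)) = G m"
    using line_through_is_ccross realiz_ccross[OF G] ij by (metis less_SucI)
  then show "\<exists>u. ccross ((G(m := u)) m) (ccross ((G(m := u)) i) ((G(m := u)) j)) = G m"
    using im by (intro exI[of _ v]) simp
qed

text \<open>Two multiple points p = H_i \<inter> H_j and q = H_k \<inter> H_l on the last line: it is the line
  p \<times> q, up to a free scalar factor.\<close>
lemma line_param_two_points:
  assumes K: "subfield_C K" and arr: "arrangement H (Suc m)"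
    and ij: "i < m" "j < m" "i \<noteq> j" "det3 (H i) (H j) (H m) = 0"
    and kl: "k < m" "l < m" "k \<noteq> l" "det3 (H k) (H l) (H m) = 0"
    and pq: "ccross (ccross (H i) (H j)) (ccross (H k) (H l)) \<noteq> 0"
    and through: "\<forall>a b. a < m \<longrightarrow> b < m \<longrightarrow> a \<noteq> b \<longrightarrow> det3 (H a) (H b) (H m) = 0 \<longrightarrow>
              (det3 (H a) (H i) (H j) = 0 \<and> det3 (H b) (H i) (H j) = 0) \<or>
              (det3 (H a) (H k) (H l) = 0 \<and> det3 (H b) (H k) (H l) = 0)"
  shows "line_param K H m (\<lambda>X. (X m $ 1) *s ccross (ccross (X i) (X j)) (ccross (X k) (X l)))"
  unfolding line_param_def
proof (intro conjI allI impI ballI)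
  have arr': "arrangement H m" using arrangement_prefix[OF arr] by simp
  have im: "i \<noteq> m" "j \<noteq> m" "k \<noteq> m" "l \<noteq> m" using ij kl by auto
  show "(\<lambda>X. ((X m $ 1) *s ccross (ccross (X i) (X j)) (ccross (X k) (X l))) $ q) \<in> polyfun" for q
    by (simp, intro pf_mult pf_var pf_ccross)
  show "((G'(m := u)) m $ 1 *s ccross (ccross ((G'(m := u)) i) ((G'(m := u)) j))
          (ccross ((G'(m := u)) k) ((G'(m := u)) l))) $ q \<in> K"
    if G': "G' \<in> realizK K m (incidence H m)" and u: "\<forall>q. u $ q \<in> K" for G' and u :: cvec and q
    using G' u im subfield_ccross[OF K] K unfolding realizK_def subfield_C_def by simp
  fix G' and u :: cvec and a b
  assume G': "G' \<in> realiz m (incidence H m)" and ab: "a < m" "b < m" "a \<noteq> b"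
    "det3 (H a) (H b) (H m) = 0"
  let ?p = "ccross (G' i) (G' j)" and ?q = "ccross (G' k) (G' l)"
  let ?h = "(u $ 1) *s ccross ?p ?q"
  have "linform ?h ?p = 0" "linform ?h ?q = 0"
    by (simp_all add: linform_smult_left linform_commute[of "ccross ?p ?q"] ccross_orth)
  then have "det3 (G' a) (G' b) ?h = 0"
    using realiz_pencil_concurrent[OF arr' G' ab(1,2) ij(1-3)]
      realiz_pencil_concurrent[OF arr' G' ab(1,2) kl(1-3)] through ab by blast
  then show "det3 (G' a) (G' b) ((G'(m := u)) m $ 1 *s ccross (ccross ((G'(m := u)) i)
    ((G'(m := u)) j)) (ccross ((G'(m := u)) k) ((G'(m := u)) l))) = 0"
    using im by simp
next
  fix G assume G: "G \<in> realiz (Suc m) (incidence H (Suc m))"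
  have im: "i \<noteq> m" "j \<noteq> m" "k \<noteq> m" "l \<noteq> m" using ij kl by auto
  let ?p = "ccross (G i) (G j)" and ?q = "ccross (G k) (G l)"
  have mp: "linform (G m) ?p = 0"
    using realiz_through[OF arr G, of m i j] ij det3_eq_0_perm(2)[of "H i"] by simp
  have mq: "linform (G m) ?q = 0"
    using realiz_through[OF arr G, of m k l] kl det3_eq_0_perm(2)[of "H k"] by simp
  have "ccross ?p ?q \<noteq> 0"
    using realiz_distinct_points[OF arr G _ _ ij(3) _ _ kl(3) pq] ij kl by simp
  then obtain t where "G m = t *s ccross ?p ?q"
    using common_zero_parallel mp mq by (metis linform_commute)
  then show "\<exists>u. (G(m := u)) m $ 1 *s ccross (ccross ((G(m := u)) i) ((G(m := u)) j))
      (ccross ((G(m := u)) k) ((G(m := u)) l)) = G m"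
    using im by (intro exI[of _ "\<chi> _. t"]) simp
qed


section \<open>Multiple points on the last line\<close>

lemma two_besides:
  assumes "3 \<le> card A"
  shows "\<exists>a b. a \<in> A - {m} \<and> b \<in> A - {m} \<and> a \<noteq> b"
proof -
  have "card A - 1 \<le> card (A - {m})" by (simp add: card_Diff_singleton_if)
  then have "Suc 1 \<le> card (A - {m})" using assms by linarith
  then obtain a B where aB: "A - {m} = insert a B" "a \<notin> B" "1 \<le> card B"
    unfolding card_le_Suc_iff by blast
  then obtain b where "b \<in> B" using card_gt_0_iff[of B] by auto
  then show ?thesis using aB by blast
qed

definition last_points :: "(nat \<Rightarrow> cvec) \<Rightarrow> nat \<Rightarrow> cvec set" where
  "last_points H m = {ccross (H a) (H b) | a b. a < m \<and> b < m \<and> a \<noteq> b \<and> det3 (H a) (H b) (H m) = 0}"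

lemma finite_last_points: "finite (last_points H m)"
  unfolding last_points_def
  by (rule finite_subset[of _ "(\<lambda>(a, b). ccross (H a) (H b)) ` ({..<m} \<times> {..<m})"]) auto

lemma multiple_points_on_last:
  assumes arr: "arrangement H (Suc m)"
  shows "ptsOn (H m) \<inter> multpts H (Suc m) = projpt ` last_points H m"
    (is "?P = projpt ` ?W")
proof
  show "projpt ` ?W \<subseteq> ?P"
    unfolding last_points_def
  proof clarify
    fix a b assume ab: "a < m" "b < m" "a \<noteq> b" "det3 (H a) (H b) (H m) = 0"
    let ?w = "ccross (H a) (H b)"
    have lm: "linform (H m) ?w = 0" using ab det3_eq_0_perm(2)[of "H a"] by (simp add: det3_linform)
    have "{a, b, m} \<subseteq> {i. i < Suc m \<and> linform (H i) ?w = 0}" using ab lm ccross_orth by auto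
    moreover have "card {a, b, m} = 3" using ab by (simp add: card_insert_if)
    ultimately have "3 \<le> card {i. i < Suc m \<and> linform (H i) ?w = 0}"
      using card_mono[of "{i. i < Suc m \<and> linform (H i) ?w = 0}" "{a, b, m}"] by simp
    then show "projpt ?w \<in> ?P"
      unfolding ptsOn_def multpts_def using arrangement_ccross[OF arr, of a b] ab lm by auto
  qed
next
  show "?P \<subseteq> projpt ` ?W"
  proof
    fix Z assume "Z \<in> ?P"
    then obtain p p' where p: "Z = projpt p" "p \<noteq> 0" "linform (H m) p = 0"
      and p': "Z = projpt p'" "p' \<noteq> 0" and three: "3 \<le> card {i. i < Suc m \<and> linform (H i) p' = 0}"
      unfolding ptsOn_def multpts_def by blast
    obtain d where "p = d *s p'" using projpt_eq_parallel p(1) p'(1) by metis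
    then have mp': "linform (H m) p' = 0" using p(2,3) by (auto simp: linform_smult_right)
    obtain a b where "a \<in> {i. i < Suc m \<and> linform (H i) p' = 0} - {m}"
      "b \<in> {i. i < Suc m \<and> linform (H i) p' = 0} - {m}" "a \<noteq> b"
      using two_besides[OF three, where m = m] by blast
    then have ab: "a < m" "b < m" "a \<noteq> b" "linform (H a) p' = 0" "linform (H b) p' = 0"
      by auto
    have c0: "ccross (H a) (H b) \<noteq> 0" using arrangement_ccross[OF arr, of a b] ab by simp
    obtain t where t: "p' = t *s ccross (H a) (H b)" using common_zero_parallel[OF ab(4,5) c0] by blast
    then have t0: "t \<noteq> 0" using p'(2) by auto
    have "det3 (H a) (H b) (H m) = 0"
      using mp' t t0 det3_eq_0_perm(2)[of "H a"] by (simp add: linform_smult_right det3_linform)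
    moreover have "Z = projpt (ccross (H a) (H b))" using p'(1) t projpt_scale[OF t0] by simp
    ultimately show "Z \<in> projpt ` ?W" using ab unfolding last_points_def by blast
  qed
qed

lemma card_le_2_cases:
  assumes "finite A" "card A \<le> 2" "x \<in> A" "y \<in> A" "x \<noteq> y" "z \<in> A"
  shows "z = x \<or> z = y"
proof (rule ccontr)
  assume "\<not> (z = x \<or> z = y)"
  then have "card {x, y, z} = 3" using assms(5) by auto
  moreover have "card {x, y, z} \<le> card A" using assms by (intro card_mono) auto
  ultimately show False using assms(2) by simp
qed

lemma same_point_through:
  assumes "projpt (ccross (H a) (H b)) = projpt (ccross (H i) (H j))"
  shows "det3 (H a) (H i) (H j) = 0 \<and> det3 (H b) (H i) (H j) = 0"
proof -
  obtain d where "ccross (H i) (H j) = d *s ccross (H a) (H b)"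
    using projpt_eq_parallel assms[symmetric] by blast
  then show ?thesis by (simp add: det3_linform linform_smult_right ccross_orth)
qed

lemma line_param_exists:
  assumes K: "subfield_C K" and arr: "arrangement H (Suc m)"
    and two: "card (ptsOn (H m) \<inter> multpts H (Suc m)) \<le> 2"
  shows "\<exists>\<Phi>. line_param K H m \<Phi>"
proof -
  let ?W = "last_points H m"
  have cardW: "card (projpt ` ?W) \<le> 2" using two multiple_points_on_last[OF arr] by simp
  have W: "ccross (H a) (H b) \<in> ?W" if "a < m" "b < m" "a \<noteq> b" "det3 (H a) (H b) (H m) = 0" for a b
    unfolding last_points_def using that by blast
  show ?thesis
  proof (cases "?W = {}")
    case True
    then show ?thesis using line_param_free W by blast
  next
    case False
    then obtain i j where ij: "i < m" "j < m" "i \<noteq> j" "det3 (H i) (H j) (H m) = 0"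
      unfolding last_points_def by blast
    let ?w0 = "ccross (H i) (H j)"
    show ?thesis
    proof (cases "\<forall>w\<in>?W. projpt w = projpt ?w0")
      case True
      have "det3 (H a) (H i) (H j) = 0 \<and> det3 (H b) (H i) (H j) = 0"
        if "a < m" "b < m" "a \<noteq> b" "det3 (H a) (H b) (H m) = 0" for a b
        using True W[OF that] same_point_through[of H a b i j] by blast
      then show ?thesis using line_param_pencil[OF K arr ij] by blast
    next
      case False
      then obtain k l where kl: "k < m" "l < m" "k \<noteq> l" "det3 (H k) (H l) (H m) = 0"
        and ne: "projpt (ccross (H k) (H l)) \<noteq> projpt ?w0"
        unfolding last_points_def by blast
      let ?w1 = "ccross (H k) (H l)"
      have "(det3 (H a) (H i) (H j) = 0 \<and> det3 (H b) (H i) (H j) = 0) \<or>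
            (det3 (H a) (H k) (H l) = 0 \<and> det3 (H b) (H k) (H l) = 0)"
        if "a < m" "b < m" "a \<noteq> b" "det3 (H a) (H b) (H m) = 0" for a b
      proof -
        have "projpt (ccross (H a) (H b)) = projpt ?w0 \<or> projpt (ccross (H a) (H b)) = projpt ?w1"
          using card_le_2_cases[OF finite_imageI[OF finite_last_points] cardW] W[OF that] W[OF ij]
            W[OF kl] ne by blast
        then show ?thesis using same_point_through[of H a b i j] same_point_through[of H a b k l] by blast
      qed
      moreover have "ccross ?w0 ?w1 \<noteq> 0"
        using ccross_if_projpt_ne arrangement_ccross[OF arr] ij kl ne by (metis less_SucI)
      ultimately show ?thesis using line_param_two_points[OF K arr ij kl] by blast
    qed
  qed
qed


lemma dense_add_line:
  assumes K: "subfield_C K" and arr: "arrangement H (Suc m)"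
    and two: "card (ptsOn (H m) \<inter> multpts H (Suc m)) \<le> 2"
    and dense: "zariski_dense (realizK K m (incidence H m)) (realiz m (incidence H m))"
  shows "zariski_dense (realizK K (Suc m) (incidence H (Suc m))) (realiz (Suc m) (incidence H (Suc m)))"
  using line_param_exists[OF K arr two] dense_step[OF K arr dense] by blast

lemma realizable_extension:
  assumes K: "subfield_C K" and "1 \<le> n" and arr: "arrangement H n"
    and two: "card (ptsOn (H (n - 1)) \<inter> multpts H n) \<le> 2"
    and dense: "zariski_dense (realizK K (n - 1) (incidence H (n - 1))) (realiz (n - 1) (incidence H (n - 1)))"
  shows "zariski_dense (realizK K n (incidence H n)) (realiz n (incidence H n)) \<and>
    realizK K n (incidence H n) \<noteq> {}"
proof -
  obtain m where n: "n = Suc m" using \<open>1 \<le> n\<close> by (cases n) auto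
  have "zariski_dense (realizK K n (incidence H n)) (realiz n (incidence H n))"
    using dense_add_line[OF K, of H m] arr two dense n by simp
  moreover have "realiz n (incidence H n) \<noteq> {}" using arrangement_in_realiz[OF arr] by blast
  ultimately show ?thesis using dense_nonempty by blast
qed

lemma arrangement_renumber:
  assumes arr: "arrangement H n" and s: "bij_betw s {..<n} {..<n}"
  shows "arrangement (H \<circ> s) n"
proof -
  have "s i < n" "s i \<noteq> s j" if "i < n" "j < n" "i \<noteq> j" for i j
    using bij_betw_apply[OF s] bij_betw_imp_inj_on[OF s] that by (auto simp: inj_on_def)
  moreover have "s i < n" if "i < n" for i using bij_betw_apply[OF s] that by auto
  ultimately show ?thesis using arr unfolding arrangement_def by auto
qed

lemma realizK_renumber:
  assumes arr: "arrangement H n" and s: "bij_betw s {..<n} {..<n}"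
    and G: "G \<in> realizK K n (incidence (H \<circ> s) n)"
  shows "realizK K n (incidence H n) \<noteq> {}"
proof -
  define r where "r = inv_into {..<n} s"
  have r: "bij_betw r {..<n} {..<n}" unfolding r_def using bij_betw_inv_into[OF s] .
  have rin: "r i < n" if "i < n" for i using bij_betw_apply[OF r] that by auto
  have rinj: "r i \<noteq> r j" if "i < n" "j < n" "i \<noteq> j" for i j
    using bij_betw_imp_inj_on[OF r] that by (auto simp: inj_on_def)
  have sr: "s (r i) = i" if "i < n" for i
    unfolding r_def using bij_betw_inv_into_right[OF s] that by auto
  have arr_s: "arrangement (H \<circ> s) n" using arrangement_renumber[OF arr s] .
  have GT: "G \<in> realiz n (incidence (H \<circ> s) n)" using G realizK_subset by blast
  define G2 where "G2 i = (if i < n then G (r i) else G i)" for i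
  have "det3 (G2 i) (G2 j) (G2 k) = 0 \<longleftrightarrow> {i,j,k} \<in> incidence H n"
    if "i < n" "j < n" "k < n" "i \<noteq> j" "i \<noteq> k" "j \<noteq> k" for i j k
    using realiz_det3_iff[OF arr_s GT, of "r i" "r j" "r k"] incidence_iff_det3[OF arr that]
    unfolding G2_def using rin sr that by simp
  then have "G2 \<in> realiz n (incidence H n)"
    using GT rin rinj unfolding realiz_def G2_def by auto
  moreover have "\<forall>i j. G2 i $ j \<in> K" using G unfolding G2_def realizK_def by auto
  ultimately show ?thesis unfolding realizK_def by blast
qed

text \<open>Inductively connected arrangements are realizable over the rationals: along the
  numbering, density of rational points propagates from the empty arrangement.\<close>
lemma ind_conn_realizable_Q:
  assumes arr: "arrangement H n" and ic: "ind_conn H n"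
  shows "realizK \<rat> n (incidence H n) \<noteq> {}"
proof -
  obtain s where s: "bij_betw s {..<n} {..<n}"
    and sc: "\<forall>t<n. card (ptsOn (H (s t)) \<inter> multpts (H \<circ> s) (Suc t)) \<le> 2"
    using ic unfolding ind_conn_def by blast
  have arr_s: "arrangement (H \<circ> s) n" using arrangement_renumber[OF arr s] .
  have "zariski_dense (realizK \<rat> t (incidence (H \<circ> s) t)) (realiz t (incidence (H \<circ> s) t))"
    if "t \<le> n" for t
    using that
  proof (induction t)
    case 0
    have "realizK \<rat> 0 (incidence (H \<circ> s) 0) = realiz 0 (incidence (H \<circ> s) 0)"
      unfolding realizK_def realiz_def by auto
    then show ?case unfolding zariski_dense_def by simp
  next
    case (Suc t)
    have "card (ptsOn ((H \<circ> s) t) \<inter> multpts (H \<circ> s) (Suc t)) \<le> 2"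
      using sc Suc.prems by simp
    moreover have "t \<le> n" using Suc.prems by simp
    ultimately show ?case
      using dense_add_line[OF subfield_Rats arrangement_prefix[OF arr_s Suc.prems]] Suc.IH by blast
  qed
  from dense_nonempty[OF this[OF order_refl]] arrangement_in_realiz[OF arr_s]
  obtain G where "G \<in> realizK \<rat> n (incidence (H \<circ> s) n)" by blast
  then show ?thesis using realizK_renumber[OF arr s] by blast
qed

theorem mainTheorem5:
  shows "(\<forall>(K::complex set) (H::nat \<Rightarrow> cvec) n.
            subfield_C K \<and> 1 \<le> n \<and> arrangement H n \<and>
            card (ptsOn (H (n - 1)) \<inter> multpts H n) \<le> 2 \<and>
            zariski_dense (realizK K (n - 1) (incidence H (n - 1)))
                          (realiz (n - 1) (incidence H (n - 1)))
          \<longrightarrow> zariski_dense (realizK K n (incidence H n)) (realiz n (incidence H n)) \<and>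
              realizK K n (incidence H n) \<noteq> {})
       \<and> (\<forall>(H::nat \<Rightarrow> cvec) n. arrangement H n \<and> ind_conn H n
            \<longrightarrow> realizK \<rat> n (incidence H n) \<noteq> {})"
  using realizable_extension ind_conn_realizable_Q by blast

end
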